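(* Let $G$ be a finite graph with maximum degree $\Delta$, with edges ordered $e_1,\ldots,e_m$, let $\gamma>1$ be real, $K=\lceil(2+\gamma)(\Delta-1)\rceil$, and $t$ a positive integer. Let $F\in\{1,\ldots,\lceil\gamma(\Delta-1)\rceil\}^t$ be an input for which, when the Procedure described in the context is run, some edge is still uncolored after step $t$, and let $R=(R_1,\ldots,R_t)$ be the record produced. Let $R^\circ$ be the word over $\{0,1\}$ obtained by concatenating, for $i=1,\ldots,t$, the word $0$ if $R_i$ is empty and the word $0\,1^{2k-2}$ if $R_i=(k,\ell)$. Then $R^\circ$ is a partial Dyck word with $t$ letters $0$ and $t-r$ letters $1$, where $r$ is the number of colored edges after step $t$. Moreover, all descents in $R^\circ$ have even length, and if every cycle of $G$ has length at least $2\ell+1$ for some integer $\ell\ge 1$, then all descents in $R^\circ$ have length at least $\max(4,2\ell)$.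
   Context: Procedure. A partial edge-coloring assigns to some edges a color in $\{1,\ldots,K\}$; initially all edges are uncolored. Fix, for every edge $e$ and every $k\ge 3$, an enumeration (e.g. lexicographic) of the cycles of length $2k$ of $G$ containing $e$. At step $i=1,2,\ldots,t$: if no edge is uncolored, stop. Otherwise let $e_j=uv$ be the uncolored edge of smallest index. Let $S'$ be the set of colors appearing on edges $xy\neq uv$ such that (1) $x=u$ or $x=v$, or (2) edges $ux$ and $vy$ exist and have the same color; let $S=\{1,\ldots,K\}\setminus S'$. Color $e_j$ with the $F_i$-th smallest element of $S$. If this creates a cycle colored with only two colors (it has length $2k\ge 6$), choose one such cycle $C$ by a fixed deterministic rule, write it as $e_{i_1},e_{i_2},\ldots,e_{i_{2k}},e_{i_1}$ (consecutive edges) with $e_{i_1}=e_j$ and $i_2<i_{2k}$, uncolor all edges of $C$ except $e_{i_2}$ and $e_{i_3}$, and set $R_i=(k,\ell)$ where $\ell$ is the index of $C$ in the fixed enumeration of cycles of length $2k$ containing $e_j$. Otherwise $R_i$ is empty. A partial Dyck word is a word over $\{0,1\}$ in which every prefix contains at least as many $0$'s as $1$'s. A descent is a maximal block of consecutive $1$'s. *)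

theory Defs
  imports Complex_Main
begin

text \<open>A finite simple graph is given by its list of edges e_1,...,e_m (the order is the
  fixed edge order); each edge is a 2-element vertex set. Edges are referred to by
  their (0-based) index in the list.\<close>

type_synonym coloring = "nat \<Rightarrow> nat option"

definition simple_edge_list :: "'a set list \<Rightarrow> bool" where
  "simple_edge_list es \<longleftrightarrow> distinct es \<and> (\<forall>e\<in>set es. \<exists>x y. x \<noteq> y \<and> e = {x, y})"

definition max_degree :: "'a set list \<Rightarrow> nat" where
  "max_degree es = Max (insert 0 ((\<lambda>v. card {i. i < length es \<and> v \<in> es ! i}) ` (\<Union>(set es))))"

text \<open>A cycle of G, represented by its set of edge indices; its length is its cardinality.\<close>
definition is_cycle :: "'a set list \<Rightarrow> nat set \<Rightarrow> bool" where
  "is_cycle es C \<longleftrightarrow> (\<exists>vs. distinct vs \<and> length vs \<ge> 3 \<and>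
     (\<forall>p<length vs. {vs ! p, vs ! ((p + 1) mod length vs)} \<in> set es) \<and>
     C = {i. i < length es \<and> (\<exists>p<length vs. es ! i = {vs ! p, vs ! ((p + 1) mod length vs)})})"

definition forbidden_colors :: "'a set list \<Rightarrow> coloring \<Rightarrow> nat \<Rightarrow> nat set" where
  "forbidden_colors es col j = {c. \<exists>i<length es. i \<noteq> j \<and> col i = Some c \<and>
     (\<exists>x y. es ! i = {x, y} \<and>
        (x \<in> es ! j \<or>
         (\<exists>u v i1 i2. es ! j = {u, v} \<and> i1 < length es \<and> i2 < length es \<and>
            es ! i1 = {u, x} \<and> es ! i2 = {v, y} \<and> col i1 \<noteq> None \<and> col i1 = col i2)))}"

definition bichrom_cycles :: "'a set list \<Rightarrow> coloring \<Rightarrow> nat \<Rightarrow> nat set set" where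
  "bichrom_cycles es col j = {C. is_cycle es C \<and> j \<in> C \<and> (\<forall>i\<in>C. col i \<noteq> None) \<and>
     card ((\<lambda>i. the (col i)) ` C) \<le> 2}"

text \<open>One step of the Procedure (when some edge is uncoloured). rule is the fixed
  deterministic rule choosing the cycle; enum e k C is the index of C in the fixed
  enumeration of the cycles of length 2k containing e.\<close>
definition proc_step ::
  "'a set list \<Rightarrow> nat \<Rightarrow> (coloring \<Rightarrow> nat \<Rightarrow> nat set set \<Rightarrow> nat set) \<Rightarrow>
   (nat \<Rightarrow> nat \<Rightarrow> nat set \<Rightarrow> nat) \<Rightarrow> coloring \<Rightarrow> nat \<Rightarrow> coloring \<times> (nat \<times> nat) option" where
  "proc_step es K rule enum col f =
    (let j = (LEAST j. j < length es \<and> col j = None);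
         S = {1..K} - forbidden_colors es col j;
         c = sorted_list_of_set S ! (f - 1);
         col1 = col(j := Some c);
         B = bichrom_cycles es col1 j
     in if B = {} then (col1, None)
        else (let C = rule col1 j B;
                  k = card C div 2;
                  i2 = Min {i\<in>C. i \<noteq> j \<and> es ! i \<inter> es ! j \<noteq> {}};
                  i3 = Min {i\<in>C. i \<noteq> j \<and> i \<noteq> i2 \<and> es ! i \<inter> es ! i2 \<noteq> {}}
              in ((\<lambda>i. if i \<in> C \<and> i \<noteq> i2 \<and> i \<noteq> i3 then None else col1 i),
                  Some (k, enum j k C))))"

definition run_procedure ::
  "'a set list \<Rightarrow> nat \<Rightarrow> (coloring \<Rightarrow> nat \<Rightarrow> nat set set \<Rightarrow> nat set) \<Rightarrow>
   (nat \<Rightarrow> nat \<Rightarrow> nat set \<Rightarrow> nat) \<Rightarrow> nat list \<Rightarrow> coloring \<times> (nat \<times> nat) option list" where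
  "run_procedure es K rule enum F =
     foldl (\<lambda>(col, R) f.
              if (\<exists>j<length es. col j = None)
              then (case proc_step es K rule enum col f of (col', r) \<Rightarrow> (col', R @ [r]))
              else (col, R))
           (\<lambda>_. None, []) F"

definition record_word :: "(nat \<times> nat) option list \<Rightarrow> nat list" where
  "record_word R = concat (map (\<lambda>r. case r of None \<Rightarrow> [0] | Some (k, l) \<Rightarrow> 0 # replicate (2 * k - 2) 1) R)"

definition partial_dyck :: "nat list \<Rightarrow> bool" where
  "partial_dyck w \<longleftrightarrow> set w \<subseteq> {0, 1} \<and>
     (\<forall>n\<le>length w. count_list (take n w) 1 \<le> count_list (take n w) 0)"

definition is_descent :: "nat list \<Rightarrow> nat \<Rightarrow> nat \<Rightarrow> bool" where
  "is_descent w a b \<longleftrightarrow> a < b \<and> b \<le> length w \<and> (\<forall>i. a \<le> i \<and> i < b \<longrightarrow> w ! i = 1) \<and>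
     (a = 0 \<or> w ! (a - 1) \<noteq> 1) \<and> (b = length w \<or> w ! b \<noteq> 1)"

end

theory Submission
  imports Defs "HOL-Number_Theory.Cong"
begin

text \<open>
  Each step colours one edge and writes a 0; when it closes a bichromatic cycle of length 2k it
  also uncolours 2k - 2 edges and writes 2k - 2 ones. So after every prefix of the run the number
  of ones is the number of steps minus the number of coloured edges, which gives the Dyck property
  and the letter counts, and every descent is the block of ones written by a single step.
  A bichromatic cycle alternates between its two colours, hence is even, and it cannot have
  length 4, because condition (2) forbids exactly the colour that would close such a cycle.
  Hence descents have even length 2k - 2 >= 4, and at least 2g when all cycles are longer than 2g.
  The step is always possible: a colour d present at both ends u, v of the new edge forbids, via
  condition (2), only the colour of the edge joining the d-neighbours of u and v, so at most
  2(Delta - 1) colours are forbidden and the F_i-th available colour exists.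
\<close>

section \<open>Binary words made of blocks\<close>

definition block_word :: "nat list \<Rightarrow> nat list" where
  "block_word ns = concat (map (\<lambda>n. 0 # replicate n 1) ns)"

lemma block_word_Nil [simp]: "block_word [] = []"
  and block_word_Cons [simp]: "block_word (n # ns) = 0 # replicate n 1 @ block_word ns"
  and block_word_append [simp]: "block_word (ns @ ms) = block_word ns @ block_word ms"
  by (simp_all add: block_word_def)

lemma count_list_replicate: "count_list (replicate n x) y = (if x = y then n else 0)"
  by (induction n) auto

lemma count_block_word_0: "count_list (block_word ns) 0 = length ns"
  and count_block_word_1: "count_list (block_word ns) 1 = sum_list ns"
  by (induction ns) (auto simp: count_list_replicate)

lemma partial_dyck_block_word:
  assumes "\<forall>q\<le>length ns. sum_list (take q ns) \<le> q"
  shows "partial_dyck (block_word ns)"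
  using assms
proof (induction ns rule: rev_induct)
  case Nil
  then show ?case by (simp add: partial_dyck_def)
next
  case (snoc n ns)
  have IH: "partial_dyck (block_word ns)"
  proof (intro snoc.IH allI impI)
    fix q assume "q \<le> length ns"
    then show "sum_list (take q ns) \<le> q" using snoc.prems[rule_format, of q] by simp
  qed
  have "sum_list ns \<le> length ns" "sum_list ns + n \<le> Suc (length ns)"
    using snoc.prems[rule_format, of "length ns"] snoc.prems[rule_format, of "Suc (length ns)"] by simp_all
  then have last_block: "sum_list ns + count_list (take k (0 # replicate n (1::nat))) 1
      \<le> length ns + count_list (take k (0 # replicate n (1::nat))) 0" for k
    by (cases k) (auto simp: count_list_replicate take_replicate)
  show ?case
    unfolding partial_dyck_def
  proof (intro conjI allI impI)
    show "set (block_word (ns @ [n])) \<subseteq> {0, 1}"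
      using IH by (auto simp: partial_dyck_def)
    fix k
    show "count_list (take k (block_word (ns @ [n]))) 1 \<le> count_list (take k (block_word (ns @ [n]))) 0"
    proof (cases "k \<le> length (block_word ns)")
      case True
      then show ?thesis using IH by (simp add: partial_dyck_def)
    next
      case False
      then show ?thesis
        using last_block[of "k - length (block_word ns)"] count_block_word_1[of ns]
        by (auto simp: count_block_word_0)
    qed
  qed
qed

lemma is_descent_append_right:
  assumes "is_descent (u @ w) a b" "length u \<le> a"
  shows "is_descent w (a - length u) (b - length u)"
proof -
  have shift: "(u @ w) ! (length u + i) = w ! i" for i
    by (simp add: nth_append)
  have "w ! (a - length u - 1) \<noteq> 1" if "length u < a"
    using assms(1) that shift[of "a - length u - 1"] by (auto simp: is_descent_def)
  moreover have "(u @ w) ! b = w ! (b - length u)"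
    using assms shift[of "b - length u"] by (simp add: is_descent_def)
  moreover have "w ! i = 1" if "a - length u \<le> i" "i < b - length u" for i
  proof -
    have "a \<le> length u + i" "length u + i < b"
      using assms(2) that by linarith+
    then show ?thesis
      using assms(1) shift[of i] unfolding is_descent_def by auto
  qed
  ultimately show ?thesis
    using assms unfolding is_descent_def by force
qed

lemma is_descent_replicate_append:
  assumes "is_descent (replicate n 1 @ w) a b" "w = [] \<or> hd w \<noteq> 1"
  shows "b - a = n \<or> (n < a \<and> is_descent w (a - n) (b - n))"
proof -
  let ?x = "replicate n 1 @ w"
  have nth_x: "?x ! i = (if i < n then 1 else w ! (i - n))" for i
    by (simp add: nth_append)
  have boundary: "?x ! n \<noteq> 1" if "n < length ?x"
    using that assms(2) by (cases w) (auto simp: nth_append)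
  have D: "a < b" "b \<le> length ?x" "\<And>i. a \<le> i \<Longrightarrow> i < b \<Longrightarrow> ?x ! i = 1"
    "a = 0 \<or> ?x ! (a - 1) \<noteq> 1" "b = length ?x \<or> ?x ! b \<noteq> 1"
    using assms(1) unfolding is_descent_def by auto
  show ?thesis
  proof (cases "a < n")
    case True
    have "a = 0"
    proof (rule ccontr)
      assume "a \<noteq> 0"
      then have "a - 1 < n"
        using True by linarith
      then have "?x ! (a - 1) = 1"
        by (simp add: nth_append)
      then show False
        using D(4) \<open>a \<noteq> 0\<close> by simp
    qed
    moreover have "b \<le> n"
    proof (rule ccontr)
      assume "\<not> b \<le> n"
      then have "?x ! n = 1" "n < length ?x"
        using D(2) D(3)[of n] True by auto
      then show False
        using boundary by simp
    qed
    moreover have "n \<le> b"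
      using D(5) nth_x[of b] \<open>b \<le> n\<close> by (cases "b < n") auto
    ultimately show ?thesis by simp
  next
    case False
    have "a \<noteq> n"
    proof
      assume "a = n"
      then have "?x ! n = 1" "n < length ?x"
        using D(1,2) D(3)[of a] by auto
      then show False
        using boundary by simp
    qed
    then have "n < a"
      using False by simp
    then show ?thesis
      using is_descent_append_right[OF assms(1)] by simp
  qed
qed

lemma is_descent_block_word: "is_descent (block_word ns) a b \<Longrightarrow> b - a \<in> set ns"
proof (induction ns arbitrary: a b)
  case Nil
  then show ?case by (auto simp: is_descent_def)
next
  case (Cons n ns)
  have "0 < a"
    using Cons.prems by (cases a) (auto simp: is_descent_def)
  then have "is_descent (replicate n 1 @ block_word ns) (a - 1) (b - 1)"
    using is_descent_append_right[of "[0]" "replicate n 1 @ block_word ns" a b] Cons.prems by simp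
  moreover have "block_word ns = [] \<or> hd (block_word ns) \<noteq> 1"
    by (cases ns) auto
  ultimately have "b - a = n \<or> (n < a - 1 \<and> is_descent (block_word ns) (a - 1 - n) (b - 1 - n))"
    using is_descent_replicate_append \<open>0 < a\<close> by fastforce
  then show ?case
  proof
    assume shifted: "n < a - 1 \<and> is_descent (block_word ns) (a - 1 - n) (b - 1 - n)"
    then have "(b - 1 - n) - (a - 1 - n) \<in> set ns"
      using Cons.IH by blast
    moreover have "a < b"
      using Cons.prems by (simp add: is_descent_def)
    then have "(b - 1 - n) - (a - 1 - n) = b - a"
      using shifted by arith
    ultimately show ?thesis by simp
  qed simp
qed

section \<open>Counting the forbidden colours\<close>

definition proper_coloring :: "'a set list \<Rightarrow> coloring \<Rightarrow> bool" where
  "proper_coloring es col \<longleftrightarrow> (\<forall>i1<length es. \<forall>i2<length es. i1 \<noteq> i2 \<longrightarrow>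
      es ! i1 \<inter> es ! i2 \<noteq> {} \<longrightarrow> col i1 \<noteq> None \<longrightarrow> col i1 \<noteq> col i2)"

abbreviation colored_edges :: "'a set list \<Rightarrow> coloring \<Rightarrow> nat set" where
  "colored_edges es col \<equiv> {i. i < length es \<and> col i \<noteq> None}"

lemma simple_edge_listD:
  assumes "simple_edge_list es" "i < length es"
  obtains x y where "x \<noteq> y" "es ! i = {x, y}"
  using assms(1) nth_mem[OF assms(2)] that unfolding simple_edge_list_def by blast

lemma simple_edge_list_nth_eq_iff:
  assumes "simple_edge_list es" "i < length es" "i' < length es"
  shows "es ! i = es ! i' \<longleftrightarrow> i = i'"
  using assms(1) nth_eq_iff_index_eq[OF _ assms(2,3)] unfolding simple_edge_list_def by blast

lemma simple_edge_list_nth_distinct: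
  assumes "simple_edge_list es" "i < length es" "es ! i = {x, y}"
  shows "x \<noteq> y"
  using simple_edge_listD[OF assms(1,2)] assms(3) by (metis doubleton_eq_iff)

lemma simple_edge_list_other_end:
  assumes "simple_edge_list es" "i < length es" "w \<in> es ! i"
  obtains x where "es ! i = {w, x}"
proof -
  obtain a b where "es ! i = {a, b}"
    using simple_edge_listD[OF assms(1,2)] by blast
  then show ?thesis
    using that assms(3) by (auto simp: insert_commute)
qed

lemma card_incident_le_max_degree:
  assumes "simple_edge_list es" "j < length es" "w \<in> es ! j"
  shows "card {i. i < length es \<and> w \<in> es ! i} \<le> max_degree es"
proof -
  have "finite e" if "e \<in> set es" for e
    using that assms(1) unfolding simple_edge_list_def by auto
  then have "finite (\<Union>(set es))"
    by blast
  moreover have "w \<in> \<Union>(set es)"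
    using assms(2,3) nth_mem by blast
  ultimately show ?thesis
    unfolding max_degree_def by (intro Max_ge) auto
qed

definition colors_at :: "'a set list \<Rightarrow> coloring \<Rightarrow> nat \<Rightarrow> 'a \<Rightarrow> nat set" where
  "colors_at es col j w = (\<lambda>i. the (col i)) ` {i. i < length es \<and> i \<noteq> j \<and> w \<in> es ! i \<and> col i \<noteq> None}"

lemma finite_colors_at [simp]: "finite (colors_at es col j w)"
  by (simp add: colors_at_def)

lemma card_colors_at:
  assumes "simple_edge_list es" "j < length es" "w \<in> es ! j"
  shows "card (colors_at es col j w) \<le> max_degree es - 1"
proof -
  let ?A = "{i. i < length es \<and> w \<in> es ! i}"
  have "card (colors_at es col j w) \<le> card {i. i < length es \<and> i \<noteq> j \<and> w \<in> es ! i \<and> col i \<noteq> None}"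
    unfolding colors_at_def by (rule card_image_le) simp
  also have "\<dots> \<le> card (?A - {j})"
    by (rule card_mono) auto
  also have "\<dots> = card ?A - 1"
    using assms(2,3) by simp
  also have "\<dots> \<le> max_degree es - 1"
    using card_incident_le_max_degree[OF assms] by simp
  finally show ?thesis .
qed

definition joined :: "'a set list \<Rightarrow> coloring \<Rightarrow> nat \<Rightarrow> 'a \<Rightarrow> 'a \<Rightarrow> bool" where
  "joined es col d x y \<longleftrightarrow> (\<exists>i<length es. es ! i = {x, y} \<and> col i = Some d)"

lemma proper_coloring_joined_unique:
  assumes "simple_edge_list es" "proper_coloring es col" "joined es col d w x" "joined es col d w y"
  shows "x = y"
proof -
  obtain i i' where i: "i < length es" "es ! i = {w, x}" "col i = Some d"
    and i': "i' < length es" "es ! i' = {w, y}" "col i' = Some d"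
    using assms(3,4) unfolding joined_def by blast
  have "i = i'"
    using assms(2) i i' unfolding proper_coloring_def by fastforce
  moreover have "w \<noteq> x" "w \<noteq> y"
    using i i' simple_edge_list_nth_distinct[OF assms(1)] by blast+
  ultimately show ?thesis
    using i(2) i'(2) by (auto simp: doubleton_eq_iff)
qed

text \<open>The colours excluded by condition (2) of the Procedure through the colour d.\<close>

definition closing_colors :: "'a set list \<Rightarrow> coloring \<Rightarrow> 'a \<Rightarrow> 'a \<Rightarrow> nat \<Rightarrow> nat set" where
  "closing_colors es col u v d = {c. \<exists>i x y. i < length es \<and> col i = Some c \<and> es ! i = {x, y} \<and>
     joined es col d u x \<and> joined es col d v y}"

lemma closing_colors_unique:
  assumes "simple_edge_list es" "proper_coloring es col"
    and "c \<in> closing_colors es col u v d" "c' \<in> closing_colors es col u v d"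
  shows "c = c'"
proof -
  obtain i x y i' x' y' where
    i: "i < length es" "col i = Some c" "es ! i = {x, y}" "joined es col d u x" "joined es col d v y" and
    i': "i' < length es" "col i' = Some c'" "es ! i' = {x', y'}" "joined es col d u x'" "joined es col d v y'"
    using assms(3,4) unfolding closing_colors_def by blast
  have "x' = x" "y' = y"
    using proper_coloring_joined_unique[OF assms(1,2)] i i' by blast+
  then have "i' = i"
    using i i' simple_edge_list_nth_eq_iff[OF assms(1)] by metis
  then show ?thesis
    using i(2) i'(2) by simp
qed

lemma closing_colors_commute: "closing_colors es col u v d = closing_colors es col v u d"
  unfolding closing_colors_def by (blast intro: insert_commute)

lemma joined_colors_at:
  assumes "joined es col d w x" "col j = None"
  shows "d \<in> colors_at es col j w"
proof -
  obtain i where "i < length es" "es ! i = {w, x}" "col i = Some d"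
    using assms(1) unfolding joined_def by blast
  then show ?thesis
    using assms(2) unfolding colors_at_def by (auto intro!: image_eqI[where x = i])
qed

lemma forbidden_colorsI_adjacent:
  assumes "simple_edge_list es" "i < length es" "i \<noteq> j" "col i = Some c" "es ! i \<inter> es ! j \<noteq> {}"
  shows "c \<in> forbidden_colors es col j"
proof -
  obtain x where x: "x \<in> es ! i" "x \<in> es ! j"
    using assms(5) by blast
  then obtain y where "es ! i = {x, y}"
    using simple_edge_list_other_end[OF assms(1,2)] by blast
  then show ?thesis
    unfolding forbidden_colors_def using assms(2-4) x(2) by blast
qed

lemma forbidden_colorsI_closing:
  assumes "i < length es" "i \<noteq> j" "col i = Some c" "es ! i = {x, y}" "es ! j = {u, v}"
    "i1 < length es" "i2 < length es" "es ! i1 = {u, x}" "es ! i2 = {v, y}"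
    "col i1 \<noteq> None" "col i1 = col i2"
  shows "c \<in> forbidden_colors es col j"
  unfolding forbidden_colors_def mem_Collect_eq
  by (rule exI[of _ i]) (use assms in blast)

lemma forbidden_colors_subset:
  assumes "col j = None" "es ! j = {u, v}"
  shows "forbidden_colors es col j \<subseteq> colors_at es col j u \<union> colors_at es col j v \<union>
           (\<Union>d \<in> colors_at es col j u \<inter> colors_at es col j v. closing_colors es col u v d)"
proof
  fix c assume "c \<in> forbidden_colors es col j"
  then obtain i x y where i: "i < length es" "i \<noteq> j" "col i = Some c" "es ! i = {x, y}"
    and via: "x \<in> es ! j \<or> (\<exists>u' v' i1 i2. es ! j = {u', v'} \<and> i1 < length es \<and> i2 < length es \<and>
            es ! i1 = {u', x} \<and> es ! i2 = {v', y} \<and> col i1 \<noteq> None \<and> col i1 = col i2)"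
    unfolding forbidden_colors_def mem_Collect_eq by (elim exE conjE) (rule that; assumption)
  show "c \<in> colors_at es col j u \<union> colors_at es col j v \<union>
           (\<Union>d \<in> colors_at es col j u \<inter> colors_at es col j v. closing_colors es col u v d)"
  proof (cases "x \<in> es ! j")
    case True
    then have "c \<in> colors_at es col j x" "x = u \<or> x = v"
      using i assms(2) unfolding colors_at_def by (auto intro!: image_eqI[where x = i])
    then show ?thesis by blast
  next
    case False
    then obtain u' v' i1 i2 where edges: "es ! j = {u', v'}" "i1 < length es" "i2 < length es"
      "es ! i1 = {u', x}" "es ! i2 = {v', y}" "col i1 \<noteq> None" "col i1 = col i2"
      using via by blast
    then obtain d where "col i1 = Some d" "col i2 = Some d"
      by auto
    then have joins: "joined es col d u' x" "joined es col d v' y"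
      using edges unfolding joined_def by auto
    then have "c \<in> closing_colors es col u' v' d"
      using i unfolding closing_colors_def by blast
    moreover have "d \<in> colors_at es col j u' \<inter> colors_at es col j v'"
      using joined_colors_at[OF joins(1) assms(1)] joined_colors_at[OF joins(2) assms(1)] by blast
    moreover have "(u' = u \<and> v' = v) \<or> (u' = v \<and> v' = u)"
      using edges(1) assms(2) by (metis doubleton_eq_iff)
    ultimately have "c \<in> closing_colors es col u v d \<and> d \<in> colors_at es col j u \<inter> colors_at es col j v"
      using closing_colors_commute[of es col v u d] by auto
    then show ?thesis
      by blast
  qed
qed

lemma UN_subsingleton_subset_image:
  assumes "\<And>d a b. d \<in> I \<Longrightarrow> a \<in> Z d \<Longrightarrow> b \<in> Z d \<Longrightarrow> a = b"
  shows "(\<Union>d\<in>I. Z d) \<subseteq> (\<lambda>d. THE c. c \<in> Z d) ` I"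
proof
  fix c assume "c \<in> (\<Union>d\<in>I. Z d)"
  then obtain d where "d \<in> I" "c \<in> Z d"
    by blast
  then have "(THE c. c \<in> Z d) = c"
    by (intro the_equality) (use assms in blast)+
  then show "c \<in> (\<lambda>d. THE c. c \<in> Z d) ` I"
    using \<open>d \<in> I\<close> by force
qed

lemma card_forbidden_colors:
  assumes simple: "simple_edge_list es" and proper: "proper_coloring es col"
    and j: "j < length es" "col j = None"
  shows "finite (forbidden_colors es col j) \<and> card (forbidden_colors es col j) \<le> 2 * (max_degree es - 1)"
proof -
  obtain u v where uv: "es ! j = {u, v}"
    using simple_edge_listD[OF simple j(1)] by blast
  define A where "A = colors_at es col j u"
  define B where "B = colors_at es col j v"
  define Z where "Z = (\<Union>d \<in> A \<inter> B. closing_colors es col u v d)"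
  let ?image = "(\<lambda>d. THE c. c \<in> closing_colors es col u v d) ` (A \<inter> B)"
  have "Z \<subseteq> ?image"
    unfolding Z_def using closing_colors_unique[OF simple proper]
    by (intro UN_subsingleton_subset_image) blast
  moreover have "finite ?image" "card ?image \<le> card (A \<inter> B)"
    by (simp_all add: A_def card_image_le)
  ultimately have Z: "finite Z" "card Z \<le> card (A \<inter> B)"
    using card_mono[of ?image Z] by (auto intro: finite_subset)
  have forbidden: "forbidden_colors es col j \<subseteq> (A \<union> B) \<union> Z"
    unfolding A_def B_def Z_def using forbidden_colors_subset[of col j es u v, OF j(2) uv] by blast
  then have "card (forbidden_colors es col j) \<le> card (A \<union> B) + card Z"
    using Z(1) by (intro order_trans[OF card_mono card_Un_le]) (auto simp: A_def B_def)
  also have "\<dots> \<le> card A + card B"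
    using Z(2) card_Un_Int[of A B] by (simp add: A_def B_def)
  also have "\<dots> \<le> 2 * (max_degree es - 1)"
    using card_colors_at[OF simple j(1), of u col] card_colors_at[OF simple j(1), of v col] uv
    unfolding A_def B_def by simp
  finally show ?thesis
    using finite_subset[OF forbidden] Z(1) by (simp add: A_def B_def)
qed

section \<open>Bichromatic cycles\<close>

lemma mod_add_left_cancel_less:
  fixes a b n :: nat
  assumes "a < n" "b < n" "(q + a) mod n = (q + b) mod n"
  shows "a = b"
  using assms cong_add_lcancel_nat cong_less_modulus_unique_nat unfolding cong_def by blast

text \<open>A cycle, traversed as the vertex sequence V 0, V 1, ... of period n.\<close>

locale closed_walk =
  fixes es :: "'a set list" and n :: nat and V :: "nat \<Rightarrow> 'a"
  assumes simple: "simple_edge_list es"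
    and length_ge_3: "3 \<le> n"
    and V_eq_iff: "V q = V q' \<longleftrightarrow> q mod n = q' mod n"
    and walk_edge: "{V q, V (Suc q)} \<in> set es"
begin

definition walk_edge_index :: "nat \<Rightarrow> nat" where
  "walk_edge_index q = (THE i. i < length es \<and> es ! i = {V q, V (Suc q)})"

definition edge_indices :: "nat set" where
  "edge_indices = {i. i < length es \<and> (\<exists>q. es ! i = {V q, V (Suc q)})}"

lemma walk_edge_index: "walk_edge_index q < length es" "es ! walk_edge_index q = {V q, V (Suc q)}"
proof -
  obtain i where i: "i < length es" "es ! i = {V q, V (Suc q)}"
    using walk_edge[of q] by (auto simp: in_set_conv_nth)
  have "i' = i" if "i' < length es" "es ! i' = {V q, V (Suc q)}" for i'
    using that i simple_edge_list_nth_eq_iff[OF simple] by metis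
  then have "walk_edge_index q = i"
    unfolding walk_edge_index_def using i by (intro the_equality) blast+
  then show "walk_edge_index q < length es" "es ! walk_edge_index q = {V q, V (Suc q)}"
    using i by simp_all
qed

lemma walk_edge_index_in: "walk_edge_index q \<in> edge_indices"
  unfolding edge_indices_def using walk_edge_index by blast

lemma walk_edge_index_eq_iff: "walk_edge_index q = walk_edge_index q' \<longleftrightarrow> q mod n = q' mod n"
proof
  assume "walk_edge_index q = walk_edge_index q'"
  then have "{V q, V (Suc q)} = {V q', V (Suc q')}"
    using walk_edge_index(2) by metis
  then have "(q mod n = q' mod n \<and> Suc q mod n = Suc q' mod n) \<or>
      (q mod n = Suc q' mod n \<and> Suc q mod n = q' mod n)"
    by (simp add: doubleton_eq_iff V_eq_iff)
  moreover have "\<not> (q mod n = Suc q' mod n \<and> Suc q mod n = q' mod n)"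
  proof
    assume "q mod n = Suc q' mod n \<and> Suc q mod n = q' mod n"
    then have "(q' + 2) mod n = (q' + 0) mod n"
      by (metis add_2_eq_Suc' add_0_right mod_Suc_eq)
    then show False
      using mod_add_left_cancel_less[of 2 n 0] length_ge_3 by simp
  qed
  ultimately show "q mod n = q' mod n"
    by blast
next
  assume "q mod n = q' mod n"
  then have "V q = V q'" "V (Suc q) = V (Suc q')"
    by (simp_all add: V_eq_iff) (metis mod_Suc_eq)
  then show "walk_edge_index q = walk_edge_index q'"
    unfolding walk_edge_index_def by simp
qed

lemma walk_edge_index_shift_neq:
  assumes "a < n" "b < n" "a \<noteq> b"
  shows "walk_edge_index (q + a) \<noteq> walk_edge_index (q + b)"
  using assms mod_add_left_cancel_less walk_edge_index_eq_iff by blast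

lemma edge_indices_eq_image: "edge_indices = walk_edge_index ` {..<n}"
proof
  show "walk_edge_index ` {..<n} \<subseteq> edge_indices"
    using walk_edge_index_in by blast
  show "edge_indices \<subseteq> walk_edge_index ` {..<n}"
  proof
    fix i assume "i \<in> edge_indices"
    then obtain q where q: "i < length es" "es ! i = {V q, V (Suc q)}"
      unfolding edge_indices_def by blast
    then have "i = walk_edge_index q"
      using walk_edge_index[of q] simple_edge_list_nth_eq_iff[OF simple] by metis
    also have "\<dots> = walk_edge_index (q mod n)"
      by (simp add: walk_edge_index_eq_iff)
    finally show "i \<in> walk_edge_index ` {..<n}"
      using length_ge_3 by auto
  qed
qed

lemma finite_edge_indices: "finite edge_indices"
  by (simp add: edge_indices_eq_image)

lemma card_edge_indices: "card edge_indices = n"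
proof -
  have "inj_on walk_edge_index {..<n}"
    by (intro inj_onI) (simp add: walk_edge_index_eq_iff)
  then show ?thesis
    by (simp add: edge_indices_eq_image card_image)
qed

lemma walk_edge_index_meet: "es ! walk_edge_index q \<inter> es ! walk_edge_index (Suc q) \<noteq> {}"
  using walk_edge_index(2) by auto

lemma edge_indices_two_neighbours:
  assumes "i \<in> edge_indices"
  obtains a b where "a \<in> edge_indices" "b \<in> edge_indices" "a \<noteq> b" "a \<noteq> i" "b \<noteq> i"
    "es ! a \<inter> es ! i \<noteq> {}" "es ! b \<inter> es ! i \<noteq> {}"
proof -
  obtain q where i: "i = walk_edge_index q"
    using assms edge_indices_eq_image by blast
  let ?a = "walk_edge_index (q + 1)" and ?b = "walk_edge_index (q + (n - 1))"
  have "?a \<noteq> ?b" "?a \<noteq> i" "?b \<noteq> i"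
    using walk_edge_index_shift_neq[of 1 "n - 1" q] walk_edge_index_shift_neq[of 1 0 q]
      walk_edge_index_shift_neq[of "n - 1" 0 q] length_ge_3 i by simp_all
  moreover have "es ! ?a \<inter> es ! i \<noteq> {}" "es ! ?b \<inter> es ! i \<noteq> {}"
  proof -
    have "V (Suc (q + (n - 1))) = V q"
      using length_ge_3 by (simp add: V_eq_iff)
    then show "es ! ?a \<inter> es ! i \<noteq> {}" "es ! ?b \<inter> es ! i \<noteq> {}"
      using walk_edge_index(2) i by auto
  qed
  moreover have "?a \<in> edge_indices" "?b \<in> edge_indices"
    by (fact walk_edge_index_in)+
  ultimately show ?thesis
    using that by blast
qed

lemma consecutive_colors_differ:
  assumes "proper_coloring es col" "col (walk_edge_index q) \<noteq> None"
  shows "col (walk_edge_index q) \<noteq> col (walk_edge_index (Suc q))"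
  using assms walk_edge_index(1) walk_edge_index_meet walk_edge_index_shift_neq[of 0 1 q] length_ge_3
  unfolding proper_coloring_def by simp

lemma two_colored_alternates:
  assumes proper: "proper_coloring es col"
    and colored: "\<forall>i\<in>edge_indices. col i \<noteq> None"
    and two: "card ((\<lambda>i. the (col i)) ` edge_indices) \<le> 2"
  shows "col (walk_edge_index (Suc (Suc q))) = col (walk_edge_index q)"
proof (rule ccontr)
  define c where "c k = the (col (walk_edge_index k))" for k
  have some: "col (walk_edge_index k) = Some (c k)" for k
    using colored walk_edge_index_in unfolding c_def by auto
  assume "col (walk_edge_index (Suc (Suc q))) \<noteq> col (walk_edge_index q)"
  then have "c (Suc (Suc q)) \<noteq> c q" "c q \<noteq> c (Suc q)" "c (Suc q) \<noteq> c (Suc (Suc q))"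
    using consecutive_colors_differ[OF proper] some by (metis option.simps(3))+
  then have "card {c q, c (Suc q), c (Suc (Suc q))} = 3"
    by simp
  moreover have "{c q, c (Suc q), c (Suc (Suc q))} \<subseteq> (\<lambda>i. the (col i)) ` edge_indices"
    unfolding c_def using walk_edge_index_in by blast
  ultimately have "3 \<le> card ((\<lambda>i. the (col i)) ` edge_indices)"
    using card_mono[OF finite_imageI[OF finite_edge_indices]] by metis
  then show False
    using two by simp
qed

lemma two_colored_even_length:
  assumes proper: "proper_coloring es col"
    and colored: "\<forall>i\<in>edge_indices. col i \<noteq> None"
    and two: "card ((\<lambda>i. the (col i)) ` edge_indices) \<le> 2"
  shows "even n"
proof (rule ccontr)
  have periodic: "col (walk_edge_index (q + 2 * m)) = col (walk_edge_index q)" for q m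
  proof (induction m)
    case (Suc m)
    have "q + 2 * Suc m = Suc (Suc (q + 2 * m))"
      by simp
    then show ?case
      using two_colored_alternates[OF assms, of "q + 2 * m"] Suc.IH by simp
  qed simp
  assume "odd n"
  then obtain m where "n = 2 * m + 1"
    by (rule oddE)
  then have "walk_edge_index (1 + 2 * m) = walk_edge_index 0"
    by (simp add: walk_edge_index_eq_iff)
  then have "col (walk_edge_index 1) = col (walk_edge_index 0)"
    using periodic[of 1 m] by simp
  moreover have "col (walk_edge_index 0) \<noteq> None"
    using colored walk_edge_index_in by blast
  ultimately show False
    using consecutive_colors_differ[OF proper, of 0] by simp
qed

lemma length_four_forbidden:
  assumes four: "n = 4" and j: "j = walk_edge_index p"
    and proper: "proper_coloring es (col(j := Some c))"
    and colored: "\<forall>i\<in>edge_indices. (col(j := Some c)) i \<noteq> None"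
    and two: "card ((\<lambda>i. the ((col(j := Some c)) i)) ` edge_indices) \<le> 2"
  shows "c \<in> forbidden_colors es col j"
proof -
  define e where "e k = walk_edge_index (p + k)" for k
  have e_ne_j: "e k \<noteq> j" if "0 < k" "k < 4" for k
    using walk_edge_index_shift_neq[of k 0 p] that four j unfolding e_def by simp
  have e_edge: "es ! e k = {V (p + k), V (p + Suc k)}" "e k < length es" for k
    using walk_edge_index[of "p + k"] unfolding e_def by simp_all
  have alternate: "(col(j := Some c)) (e (Suc (Suc k))) = (col(j := Some c)) (e k)" for k
    using two_colored_alternates[OF proper colored two, of "p + k"] unfolding e_def by simp
  have "V (p + Suc 3) = V p"
    using four by (simp add: V_eq_iff)
  then have e3: "es ! e 3 = {V p, V (p + 3)}"
    using e_edge(1)[of 3] by (metis insert_commute)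
  have ej: "es ! j = {V p, V (Suc p)}" and e1: "es ! e 1 = {V (Suc p), V (p + 2)}"
    using j e_edge(1)[of 1] walk_edge_index(2)[of p] by (simp_all add: numeral_2_eq_2)
  have e2: "es ! e 2 = {V (p + 3), V (p + 2)}"
    using e_edge(1)[of 2] by (simp add: numeral_2_eq_2 numeral_3_eq_3 insert_commute)
  have c2: "col (e 2) = Some c"
    using alternate[of 0] e_ne_j[of 2] j unfolding e_def by (simp add: numeral_2_eq_2)
  have c31: "col (e 3) = col (e 1)"
    using alternate[of 1] e_ne_j[of 1] e_ne_j[of 3] by (simp add: numeral_3_eq_3)
  have "(col(j := Some c)) (e 1) \<noteq> None"
    using colored walk_edge_index_in unfolding e_def by blast
  then have c3: "col (e 3) \<noteq> None"
    using e_ne_j[of 1] c31 by simp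
  have "e 2 \<noteq> j"
    using e_ne_j[of 2] by simp
  with e_edge(2) c2 e2 ej e3 e1 c3 c31 show ?thesis
    by (intro forbidden_colorsI_closing[of "e 2" es j col c _ _ "V p" "V (Suc p)" "e 3" "e 1"])
qed

end

lemma is_cycle_closed_walk:
  assumes simple: "simple_edge_list es" and cycle: "is_cycle es C"
  obtains n V where "closed_walk es n V" "C = closed_walk.edge_indices es V"
proof -
  obtain vs where vs: "distinct vs" "3 \<le> length vs"
    "\<forall>p<length vs. {vs ! p, vs ! ((p + 1) mod length vs)} \<in> set es"
    "C = {i. i < length es \<and> (\<exists>p<length vs. es ! i = {vs ! p, vs ! ((p + 1) mod length vs)})}"
    using cycle unfolding is_cycle_def by blast
  define n where "n = length vs"
  define V where "V q = vs ! (q mod n)" for q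
  have "0 < n"
    using vs(2) unfolding n_def by linarith
  then have mod_less: "q mod n < n" for q
    by simp
  have V_Suc: "V (Suc q) = vs ! ((q mod n + 1) mod n)" for q
    unfolding V_def by (simp add: mod_Suc_eq)
  have walk: "closed_walk es n V"
  proof
    show "3 \<le> n"
      using vs(2) n_def by simp
    show "V q = V q' \<longleftrightarrow> q mod n = q' mod n" for q q'
      unfolding V_def using vs(1) mod_less nth_eq_iff_index_eq n_def by metis
    show "{V q, V (Suc q)} \<in> set es" for q
      using vs(3) mod_less V_Suc[of q] unfolding V_def n_def by simp
  qed (fact simple)
  have "(\<exists>p<n. es ! i = {vs ! p, vs ! ((p + 1) mod n)}) \<longleftrightarrow> (\<exists>q. es ! i = {V q, V (Suc q)})" for i
  proof
    assume "\<exists>q. es ! i = {V q, V (Suc q)}"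
    then obtain q where "es ! i = {vs ! (q mod n), vs ! ((q mod n + 1) mod n)}"
      using V_Suc unfolding V_def by metis
    then show "\<exists>p<n. es ! i = {vs ! p, vs ! ((p + 1) mod n)}"
      using mod_less by blast
  next
    assume "\<exists>p<n. es ! i = {vs ! p, vs ! ((p + 1) mod n)}"
    then obtain p where "p < n" "es ! i = {vs ! p, vs ! ((p + 1) mod n)}"
      by blast
    then have "es ! i = {V p, V (Suc p)}"
      unfolding V_def by simp
    then show "\<exists>q. es ! i = {V q, V (Suc q)}"
      by blast
  qed
  then have "C = closed_walk.edge_indices es V"
    using vs(4) unfolding closed_walk.edge_indices_def[OF walk] n_def by simp
  then show ?thesis
    using that walk by blast
qed

lemma is_cycle_subset: "is_cycle es C \<Longrightarrow> C \<subseteq> {..<length es}"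
  unfolding is_cycle_def by auto

lemma is_cycle_two_neighbours:
  assumes "simple_edge_list es" "is_cycle es C" "i \<in> C"
  obtains a b where "a \<in> C" "b \<in> C" "a \<noteq> b" "a \<noteq> i" "b \<noteq> i"
    "es ! a \<inter> es ! i \<noteq> {}" "es ! b \<inter> es ! i \<noteq> {}"
proof -
  obtain n V where "closed_walk es n V" "C = closed_walk.edge_indices es V"
    using is_cycle_closed_walk[OF assms(1,2)] by blast
  then show ?thesis
    using closed_walk.edge_indices_two_neighbours assms(3) that by metis
qed

lemma bichromatic_cycle_length:
  assumes simple: "simple_edge_list es"
    and proper: "proper_coloring es (col(j := Some c))"
    and fresh: "c \<notin> forbidden_colors es col j"
    and C: "C \<in> bichrom_cycles es (col(j := Some c)) j"
  shows "even (card C)" "6 \<le> card C"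
proof -
  have cycle: "is_cycle es C" and "j \<in> C"
    and colored: "\<forall>i\<in>C. (col(j := Some c)) i \<noteq> None"
    and two: "card ((\<lambda>i. the ((col(j := Some c)) i)) ` C) \<le> 2"
    using C unfolding bichrom_cycles_def by auto
  obtain n V where walk: "closed_walk es n V" and C_eq: "C = closed_walk.edge_indices es V"
    using is_cycle_closed_walk[OF simple cycle] by blast
  interpret closed_walk es n V
    by (fact walk)
  have card: "card C = n"
    using C_eq card_edge_indices by simp
  have "even n"
    using two_colored_even_length[OF proper] colored two C_eq by simp
  moreover obtain p where "j = walk_edge_index p"
    using \<open>j \<in> C\<close> C_eq edge_indices_eq_image by blast
  then have "n \<noteq> 4"
    using length_four_forbidden[OF _ _ proper] colored two C_eq fresh by blast
  ultimately show "even (card C)" "6 \<le> card C"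
    using card length_ge_3 by presburger+
qed

section \<open>One step and a whole run of the Procedure\<close>

lemma proper_coloring_fun_upd:
  assumes simple: "simple_edge_list es" and proper: "proper_coloring es col"
    and fresh: "c \<notin> forbidden_colors es col j"
  shows "proper_coloring es (col(j := Some c))"
  unfolding proper_coloring_def
proof (intro allI impI)
  fix i1 i2 assume i: "i1 < length es" "i2 < length es" "i1 \<noteq> i2" "es ! i1 \<inter> es ! i2 \<noteq> {}"
    "(col(j := Some c)) i1 \<noteq> None"
  have other: "col i \<noteq> Some c" if "i < length es" "i \<noteq> j" "es ! i \<inter> es ! j \<noteq> {}" for i
    using forbidden_colorsI_adjacent[OF simple that(1,2)] that(3) fresh by blast
  consider "i1 = j" | "i2 = j" | "i1 \<noteq> j" "i2 \<noteq> j"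
    by blast
  then show "(col(j := Some c)) i1 \<noteq> (col(j := Some c)) i2"
  proof cases
    case 1
    then show ?thesis
      using other[of i2] i by (simp add: Int_commute)
  next
    case 2
    then show ?thesis
      using other[of i1] i by simp
  next
    case 3
    then show ?thesis
      using i proper unfolding proper_coloring_def by simp
  qed
qed

lemma proper_coloring_uncolor:
  "proper_coloring es col \<Longrightarrow> proper_coloring es (\<lambda>i. if P i then None else col i)"
  unfolding proper_coloring_def by auto

lemma chosen_color_fresh:
  assumes simple: "simple_edge_list es" and proper: "proper_coloring es col"
    and j: "j < length es" "col j = None"
    and f: "1 \<le> f" "2 * (max_degree es - 1) + f \<le> K"
  shows "sorted_list_of_set ({1..K} - forbidden_colors es col j) ! (f - 1) \<notin> forbidden_colors es col j"
proof -
  let ?S = "{1..K} - forbidden_colors es col j"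
  have "finite (forbidden_colors es col j)" "card (forbidden_colors es col j) \<le> 2 * (max_degree es - 1)"
    using card_forbidden_colors[OF simple proper j] by simp_all
  then have "K - 2 * (max_degree es - 1) \<le> card ?S"
    using diff_card_le_card_Diff[of "forbidden_colors es col j" "{1..K}"] by simp
  then have "f - 1 < length (sorted_list_of_set ?S)"
    using f by (simp only: length_sorted_list_of_set)
  then have "sorted_list_of_set ?S ! (f - 1) \<in> set (sorted_list_of_set ?S)"
    by (rule nth_mem)
  then show ?thesis
    by simp
qed

lemma card_colored_fun_upd:
  assumes "j < length es" "col j = None"
  shows "card (colored_edges es (col(j := Some c))) = Suc (card (colored_edges es col))"
proof -
  have "colored_edges es (col(j := Some c)) = insert j (colored_edges es col)"
    using assms by auto
  then show ?thesis
    using assms(2) by simp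
qed

lemma card_colored_uncolor:
  assumes "C \<subseteq> colored_edges es col" "a \<in> C" "b \<in> C" "a \<noteq> b"
  shows "card (colored_edges es (\<lambda>i. if i \<in> C \<and> i \<noteq> a \<and> i \<noteq> b then None else col i)) + (card C - 2)
    = card (colored_edges es col)"
proof -
  have "finite C"
    using assms(1) finite_subset by fastforce
  then have "card (C - {a, b}) = card C - 2"
    using assms(2-4) by (simp add: card_Diff_subset)
  moreover have "colored_edges es (\<lambda>i. if i \<in> C \<and> i \<noteq> a \<and> i \<noteq> b then None else col i)
      = colored_edges es col - (C - {a, b})"
    by auto
  moreover have "card (colored_edges es col - (C - {a, b})) = card (colored_edges es col) - card (C - {a, b})"
    using assms(1) \<open>finite C\<close> by (intro card_Diff_subset) auto
  moreover have "card (C - {a, b}) \<le> card (colored_edges es col)"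
    using assms(1) by (intro card_mono) auto
  ultimately show ?thesis
    by simp
qed

lemma bichromatic_cycle_kept_edges:
  assumes simple: "simple_edge_list es" and C: "C \<in> bichrom_cycles es col j"
    and i2: "i2 = Min {i\<in>C. i \<noteq> j \<and> es ! i \<inter> es ! j \<noteq> {}}"
    and i3: "i3 = Min {i\<in>C. i \<noteq> j \<and> i \<noteq> i2 \<and> es ! i \<inter> es ! i2 \<noteq> {}}"
  shows "i2 \<in> C" "i3 \<in> C" "i3 \<noteq> i2"
proof -
  have cycle: "is_cycle es C" and "j \<in> C"
    using C unfolding bichrom_cycles_def by auto
  have finite: "finite C"
    using is_cycle_subset[OF cycle] finite_subset by blast
  obtain a b where "a \<in> C" "b \<in> C" "a \<noteq> b" "a \<noteq> j" "es ! a \<inter> es ! j \<noteq> {}"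
    using is_cycle_two_neighbours[OF simple cycle \<open>j \<in> C\<close>] by metis
  then have "i2 \<in> {i\<in>C. i \<noteq> j \<and> es ! i \<inter> es ! j \<noteq> {}}"
    unfolding i2 using finite by (intro Min_in) auto
  then show "i2 \<in> C" by simp
  obtain a b where "a \<in> C" "b \<in> C" "a \<noteq> b" "a \<noteq> i2" "b \<noteq> i2"
    "es ! a \<inter> es ! i2 \<noteq> {}" "es ! b \<inter> es ! i2 \<noteq> {}"
    using is_cycle_two_neighbours[OF simple cycle \<open>i2 \<in> C\<close>] by metis
  then have "{i\<in>C. i \<noteq> j \<and> i \<noteq> i2 \<and> es ! i \<inter> es ! i2 \<noteq> {}} \<noteq> {}"
    by blast
  then have "i3 \<in> {i\<in>C. i \<noteq> j \<and> i \<noteq> i2 \<and> es ! i \<inter> es ! i2 \<noteq> {}}"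
    unfolding i3 using finite by (intro Min_in) auto
  then show "i3 \<in> C" "i3 \<noteq> i2" by simp_all
qed

definition record_ones :: "(nat \<times> nat) option \<Rightarrow> nat" where
  "record_ones r = (case r of None \<Rightarrow> 0 | Some (k, l) \<Rightarrow> 2 * k - 2)"

lemma record_word_eq_block_word: "record_word R = block_word (map record_ones R)"
  by (induction R) (auto simp: record_word_def record_ones_def split: option.splits)

definition cycle_descent :: "'a set list \<Rightarrow> nat \<Rightarrow> bool" where
  "cycle_descent es x \<longleftrightarrow> (\<exists>C. is_cycle es C \<and> even (card C) \<and> 6 \<le> card C \<and> x = card C - 2)"

lemma uncolor_bichromatic_cycle:
  assumes simple: "simple_edge_list es"
    and proper: "proper_coloring es (col(j := Some c))"
    and fresh: "c \<notin> forbidden_colors es col j"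
    and C: "C \<in> bichrom_cycles es (col(j := Some c)) j"
    and i2: "i2 = Min {i\<in>C. i \<noteq> j \<and> es ! i \<inter> es ! j \<noteq> {}}"
    and i3: "i3 = Min {i\<in>C. i \<noteq> j \<and> i \<noteq> i2 \<and> es ! i \<inter> es ! i2 \<noteq> {}}"
  defines "col' \<equiv> \<lambda>i. if i \<in> C \<and> i \<noteq> i2 \<and> i \<noteq> i3 then None else (col(j := Some c)) i"
  shows "card (colored_edges es col') + (card C - 2) = card (colored_edges es (col(j := Some c)))"
    and "proper_coloring es col'"
    and "even (card C)"
    and "cycle_descent es (card C - 2)"
proof -
  have kept: "i2 \<in> C" "i3 \<in> C" "i3 \<noteq> i2"
    using bichromatic_cycle_kept_edges[OF simple C i2 i3] by simp_all
  have "C \<subseteq> colored_edges es (col(j := Some c))"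
    using C is_cycle_subset unfolding bichrom_cycles_def by fastforce
  then show "card (colored_edges es col') + (card C - 2) = card (colored_edges es (col(j := Some c)))"
    unfolding col'_def by (rule card_colored_uncolor[OF _ kept(1,2) not_sym[OF kept(3)]])
  show "proper_coloring es col'"
    unfolding col'_def using proper by (rule proper_coloring_uncolor)
  show "even (card C)" "cycle_descent es (card C - 2)"
    using bichromatic_cycle_length[OF simple proper fresh C] C
    unfolding cycle_descent_def bichrom_cycles_def by auto
qed

lemma proc_step_invariant:
  assumes simple: "simple_edge_list es" and proper: "proper_coloring es col"
    and uncolored: "\<exists>j<length es. col j = None"
    and f: "1 \<le> f" "2 * (max_degree es - 1) + f \<le> K"
    and chooser: "\<forall>c j X. X \<noteq> {} \<longrightarrow> rule c j X \<in> X"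
    and step: "proc_step es K rule enum col f = (col', r)"
  shows "proper_coloring es col'"
    and "card (colored_edges es col') + record_ones r = Suc (card (colored_edges es col))"
    and "record_ones r = 0 \<or> cycle_descent es (record_ones r)"
proof -
  define j where "j = (LEAST j. j < length es \<and> col j = None)"
  define c where "c = sorted_list_of_set ({1..K} - forbidden_colors es col j) ! (f - 1)"
  define col1 where "col1 = col(j := Some c)"
  define B where "B = bichrom_cycles es col1 j"
  define C where "C = rule col1 j B"
  define i2 where "i2 = Min {i\<in>C. i \<noteq> j \<and> es ! i \<inter> es ! j \<noteq> {}}"
  define i3 where "i3 = Min {i\<in>C. i \<noteq> j \<and> i \<noteq> i2 \<and> es ! i \<inter> es ! i2 \<noteq> {}}"
  have "proc_step es K rule enum col f = (if B = {} then (col1, None) else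
      ((\<lambda>i. if i \<in> C \<and> i \<noteq> i2 \<and> i \<noteq> i3 then None else col1 i), Some (card C div 2, enum j (card C div 2) C)))"
    unfolding proc_step_def Let_def i3_def i2_def C_def B_def col1_def c_def j_def ..
  then have result: "(col', r) = (if B = {} then (col1, None) else
      ((\<lambda>i. if i \<in> C \<and> i \<noteq> i2 \<and> i \<noteq> i3 then None else col1 i), Some (card C div 2, enum j (card C div 2) C)))"
    using step by simp
  have j: "j < length es" "col j = None"
    using LeastI_ex[OF uncolored] unfolding j_def by simp_all
  have fresh: "c \<notin> forbidden_colors es col j"
    unfolding c_def using chosen_color_fresh[OF simple proper j f] .
  have proper1: "proper_coloring es col1"
    unfolding col1_def using proper_coloring_fun_upd[OF simple proper fresh] .
  have count1: "card (colored_edges es col1) = Suc (card (colored_edges es col))"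
    unfolding col1_def using card_colored_fun_upd[of j es col c, OF j] .
  have "proper_coloring es col' \<and> card (colored_edges es col') + record_ones r = Suc (card (colored_edges es col)) \<and>
      (record_ones r = 0 \<or> cycle_descent es (record_ones r))"
  proof (cases "B = {}")
    case True
    then show ?thesis
      using result proper1 count1 by (simp add: record_ones_def)
  next
    case False
    then have CB: "C \<in> bichrom_cycles es col1 j"
      unfolding C_def B_def using chooser by blast
    have "card (colored_edges es col') + (card C - 2) = card (colored_edges es col1)"
      "proper_coloring es col'" "even (card C)" "cycle_descent es (card C - 2)"
      using uncolor_bichromatic_cycle[OF simple proper1[unfolded col1_def] fresh CB[unfolded col1_def]
          i2_def i3_def] result False unfolding col1_def by simp_all
    moreover have "record_ones r = card C - 2"
      using result False \<open>even (card C)\<close> by (simp add: record_ones_def)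
    ultimately show ?thesis
      using count1 by simp
  qed
  then show "proper_coloring es col'"
    "card (colored_edges es col') + record_ones r = Suc (card (colored_edges es col))"
    "record_ones r = 0 \<or> cycle_descent es (record_ones r)"
    by simp_all
qed

definition run_invariant :: "'a set list \<Rightarrow> coloring \<Rightarrow> (nat \<times> nat) option list \<Rightarrow> bool" where
  "run_invariant es col R \<longleftrightarrow> proper_coloring es col \<and>
     sum_list (map record_ones R) + card (colored_edges es col) = length R \<and>
     (\<forall>q\<le>length R. sum_list (take q (map record_ones R)) \<le> q) \<and>
     (\<forall>r\<in>set R. record_ones r = 0 \<or> cycle_descent es (record_ones r))"

lemma run_invariant_snoc:
  assumes inv: "run_invariant es col R"
    and proper': "proper_coloring es col'"
    and count: "card (colored_edges es col') + record_ones r = Suc (card (colored_edges es col))"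
    and descent: "record_ones r = 0 \<or> cycle_descent es (record_ones r)"
  shows "run_invariant es col' (R @ [r])"
proof -
  have total: "sum_list (map record_ones (R @ [r])) + card (colored_edges es col') = length (R @ [r])"
    using inv count unfolding run_invariant_def by simp
  have "sum_list (take q (map record_ones (R @ [r]))) \<le> q" if "q \<le> length (R @ [r])" for q
  proof (cases "q \<le> length R")
    case True
    then show ?thesis
      using inv unfolding run_invariant_def by simp
  next
    case False
    then show ?thesis
      using that total by simp
  qed
  then show ?thesis
    using inv proper' total descent unfolding run_invariant_def by auto
qed

lemma run_procedure_invariant:
  assumes simple: "simple_edge_list es"
    and chooser: "\<forall>c j X. X \<noteq> {} \<longrightarrow> rule c j X \<in> X"
    and F: "\<forall>f\<in>set F. 1 \<le> f \<and> 2 * (max_degree es - 1) + f \<le> K"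
    and run: "run_procedure es K rule enum F = (col, R)"
  shows "run_invariant es col R \<and> (length R = length F \<or> (\<forall>j<length es. col j \<noteq> None))"
  using F run
proof (induction F arbitrary: col R rule: rev_induct)
  case Nil
  then show ?case
    unfolding run_procedure_def run_invariant_def proper_coloring_def by auto
next
  case (snoc f F)
  obtain col0 R0 where run0: "run_procedure es K rule enum F = (col0, R0)"
    by fastforce
  then have IH: "run_invariant es col0 R0" "length R0 = length F \<or> (\<forall>j<length es. col0 j \<noteq> None)"
    using snoc.IH snoc.prems(1) by auto
  have run_snoc: "run_procedure es K rule enum (F @ [f]) =
     (if \<exists>j<length es. col0 j = None
      then (case proc_step es K rule enum col0 f of (col', r) \<Rightarrow> (col', R0 @ [r]))
      else (col0, R0))"
    using run0 unfolding run_procedure_def by simp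
  show ?case
  proof (cases "\<exists>j<length es. col0 j = None")
    case True
    obtain col' r where step: "proc_step es K rule enum col0 f = (col', r)"
      by fastforce
    have "col = col'" "R = R0 @ [r]"
      using run_snoc True step snoc.prems(2) by simp_all
    moreover have "proper_coloring es col0"
      using IH(1) unfolding run_invariant_def by simp
    ultimately have "run_invariant es col R"
      using run_invariant_snoc[OF IH(1)] proc_step_invariant[OF simple _ True _ _ chooser step]
        snoc.prems(1) by simp
    moreover have "length R0 = length F"
      using IH(2) True by blast
    ultimately show ?thesis
      using \<open>R = R0 @ [r]\<close> by simp
  next
    case False
    then show ?thesis
      using run_snoc[unfolded if_not_P[OF False]] snoc.prems(2) IH by simp
  qed
qed

lemma count_record_word_0: "count_list (record_word R) 0 = length R"
  by (simp add: record_word_eq_block_word count_block_word_0)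

lemma run_invariant_count_record_word_1:
  "run_invariant es col R \<Longrightarrow> count_list (record_word R) 1 + card (colored_edges es col) = length R"
  unfolding run_invariant_def record_word_eq_block_word count_block_word_1 by simp

lemma run_invariant_partial_dyck: "run_invariant es col R \<Longrightarrow> partial_dyck (record_word R)"
  unfolding record_word_eq_block_word run_invariant_def by (intro partial_dyck_block_word) simp

lemma run_invariant_descent:
  assumes "run_invariant es col R" "is_descent (record_word R) a b"
  shows "cycle_descent es (b - a)"
proof -
  have "b - a \<in> set (map record_ones R)"
    using assms(2) is_descent_block_word unfolding record_word_eq_block_word by blast
  moreover have "b - a \<noteq> 0"
    using assms(2) unfolding is_descent_def by simp
  ultimately show ?thesis
    using assms(1) unfolding run_invariant_def by auto
qed

lemma palette_size:
  fixes \<gamma> :: real and D :: nat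
  assumes "\<gamma> > 1" "1 \<le> nat \<lceil>\<gamma> * (real D - 1)\<rceil>"
  shows "nat \<lceil>(2 + \<gamma>) * (real D - 1)\<rceil> = nat \<lceil>\<gamma> * (real D - 1)\<rceil> + 2 * (D - 1)"
proof -
  have "\<gamma> * (real D - 1) > 0"
    using assms(2) by linarith
  then have "D \<ge> 2"
    using assms(1) by (simp add: zero_less_mult_iff)
  then have split: "(2 + \<gamma>) * (real D - 1) = \<gamma> * (real D - 1) + of_int (int (2 * (D - 1)))"
    by (simp add: algebra_simps of_nat_diff)
  have "\<lceil>(2 + \<gamma>) * (real D - 1)\<rceil> = \<lceil>\<gamma> * (real D - 1)\<rceil> + int (2 * (D - 1))"
    unfolding split by (rule ceiling_add_of_int)
  then show ?thesis
    using assms(2) by (simp add: nat_add_distrib)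
qed

lemma cycle_descent_even: "cycle_descent es x \<Longrightarrow> even x"
  unfolding cycle_descent_def by auto

lemma cycle_descent_girth:
  assumes "cycle_descent es x" "\<forall>C. is_cycle es C \<longrightarrow> 2 * g + 1 \<le> card C"
  shows "max 4 (2 * g) \<le> x"
proof -
  obtain C where C: "is_cycle es C" "even (card C)" "6 \<le> card C" "x = card C - 2"
    using assms(1) unfolding cycle_descent_def by blast
  moreover have "2 * g + 1 \<le> card C"
    using assms(2) C(1) by blast
  ultimately have "2 * g + 2 \<le> card C"
    by presburger
  then have "4 \<le> x" "2 * g \<le> x"
    using C(3,4) by linarith+
  then show ?thesis
    by simp
qed

theorem lemma4:
  fixes es :: "'a set list" and \<gamma> :: real and K t :: nat and F :: "nat list"
    and rule :: "coloring \<Rightarrow> nat \<Rightarrow> nat set set \<Rightarrow> nat set"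
    and enum :: "nat \<Rightarrow> nat \<Rightarrow> nat set \<Rightarrow> nat"
    and col :: coloring and R :: "(nat \<times> nat) option list"
  assumes "simple_edge_list es"
    and "\<gamma> > 1"
    and "K = nat \<lceil>(2 + \<gamma>) * (real (max_degree es) - 1)\<rceil>"
    and "t > 0" and "length F = t"
    and "\<forall>f\<in>set F. 1 \<le> f \<and> f \<le> nat \<lceil>\<gamma> * (real (max_degree es) - 1)\<rceil>"
    and "\<forall>c j X. X \<noteq> {} \<longrightarrow> rule c j X \<in> X"
    and "\<forall>e k. inj_on (enum e k) {C. is_cycle es C \<and> e \<in> C \<and> card C = 2 * k}"
    and "run_procedure es K rule enum F = (col, R)"
    and "\<exists>j<length es. col j = None"
  shows "partial_dyck (record_word R)
    \<and> count_list (record_word R) 0 = t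
    \<and> int (count_list (record_word R) 1) = int t - int (card {i. i < length es \<and> col i \<noteq> None})
    \<and> (\<forall>a b. is_descent (record_word R) a b \<longrightarrow> even (b - a))
    \<and> (\<forall>g::nat. g \<ge> 1 \<and> (\<forall>C. is_cycle es C \<longrightarrow> card C \<ge> 2 * g + 1) \<longrightarrow>
         (\<forall>a b. is_descent (record_word R) a b \<longrightarrow> b - a \<ge> max 4 (2 * g)))"
proof -
  obtain f0 where "f0 \<in> set F"
    using assms(4,5) by (cases F) auto
  then have "1 \<le> nat \<lceil>\<gamma> * (real (max_degree es) - 1)\<rceil>"
    using assms(6) by fastforce
  then have "\<forall>f\<in>set F. 1 \<le> f \<and> 2 * (max_degree es - 1) + f \<le> K"
    using assms(3,6) palette_size[OF assms(2)] by fastforce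
  then have inv: "run_invariant es col R" and "length R = t"
    using run_procedure_invariant[OF assms(1,7) _ assms(9)] assms(5,10) by auto
  have "int (count_list (record_word R) 1) = int t - int (card (colored_edges es col))"
    using run_invariant_count_record_word_1[OF inv] \<open>length R = t\<close> by linarith
  moreover have "\<forall>a b. is_descent (record_word R) a b \<longrightarrow> even (b - a)"
    using run_invariant_descent[OF inv] cycle_descent_even by blast
  moreover have "\<forall>g::nat. g \<ge> 1 \<and> (\<forall>C. is_cycle es C \<longrightarrow> card C \<ge> 2 * g + 1) \<longrightarrow>
      (\<forall>a b. is_descent (record_word R) a b \<longrightarrow> b - a \<ge> max 4 (2 * g))"
    using run_invariant_descent[OF inv] cycle_descent_girth by blast
  ultimately show ?thesis
    using run_invariant_partial_dyck[OF inv] count_record_word_0 \<open>length R = t\<close> by simp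
qed

end
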